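(* Let $K\ge2$, $n\ge1$, and let $\pi$ be a probability distribution on $[K]^n$. Then for all $c\neq c'$ in $[K]^n$ with $\pi(c)>0$, \[ P_{\mathrm{R}}(c,c')\;\ge\;\frac{1}{2(K-1)}\,P_{\mathrm{MG}}(c,c'). \]
   Context: Notation: $[K]=\{1,\dots,K\}$; $n_k(c)=\#\{i:c_i=k\}$; $c_{-i}$ is $c$ without its $i$-th entry, $(c_{-i},k)$ is $c$ with $c_i$ replaced by $k$; $\pi(c_i=k\mid c_{-i})=\pi((c_{-i},k))/\sum_{j}\pi((c_{-i},j))$. $\mathcal{K}=\{(k,k')\in[K]^2:k<k'\}$, $p_c(k,k')=\frac{n_k(c)+n_{k'}(c)}{(K-1)n}$. $r(c,i,k_-,k_+)=\frac{n_{k_-}(c)}{n_{k_+}(c)+1}\cdot\frac{\pi(c_i=k_+\mid c_{-i})}{\pi(c_i=k_-\mid c_{-i})}$. $P_{\mathrm{MG}}(c,c')=\frac1n\sum_{i=1}^n\mathbb 1(c'_{-i}=c_{-i})\pi(c_i=c'_i\mid c_{-i})$ (random-scan Gibbs sampler). $P_{\mathrm{R}}$: from $c$, sample $(k,k')\sim p_c$; set $(k_-,k_+)=(k,k')$ or $(k',k)$ with probability $1/2$ each; if $n_{k_-}(c)=0$ stay at $c$; otherwise pick $i$ uniformly from $\{i':c_{i'}=k_-\}$ and move to $(c_{-i},k_+)$ with probability $\min\{1,r(c,i,k_-,k_+)\}$, else stay at $c$. *)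

theory Defs
  imports "HOL-Library.FuncSet" Complex_Main
begin

definition configs :: "nat \<Rightarrow> nat \<Rightarrow> (nat \<Rightarrow> nat) set" where
  "configs K n = PiE {1..n} (\<lambda>_. {1..K})"

definition is_distribution :: "nat \<Rightarrow> nat \<Rightarrow> ((nat \<Rightarrow> nat) \<Rightarrow> real) \<Rightarrow> bool" where
  "is_distribution K n \<pi> \<longleftrightarrow>
     (\<forall>c\<in>configs K n. \<pi> c \<ge> 0) \<and> (\<Sum>c\<in>configs K n. \<pi> c) = 1"

definition cnt :: "nat \<Rightarrow> (nat \<Rightarrow> nat) \<Rightarrow> nat \<Rightarrow> nat" where
  "cnt n c k = card {i\<in>{1..n}. c i = k}"

definition cond_prob :: "nat \<Rightarrow> ((nat \<Rightarrow> nat) \<Rightarrow> real) \<Rightarrow> (nat \<Rightarrow> nat) \<Rightarrow> nat \<Rightarrow> nat \<Rightarrow> real" where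
  "cond_prob K \<pi> c i k = \<pi> (c(i := k)) / (\<Sum>j\<in>{1..K}. \<pi> (c(i := j)))"

definition P_MG :: "nat \<Rightarrow> nat \<Rightarrow> ((nat \<Rightarrow> nat) \<Rightarrow> real) \<Rightarrow> (nat \<Rightarrow> nat) \<Rightarrow> (nat \<Rightarrow> nat) \<Rightarrow> real" where
  "P_MG K n \<pi> c c' = (1 / real n) *
     (\<Sum>i\<in>{1..n}. (if (\<forall>j\<in>{1..n}. j \<noteq> i \<longrightarrow> c' j = c j) then cond_prob K \<pi> c i (c' i) else 0))"

definition p_pair :: "nat \<Rightarrow> nat \<Rightarrow> (nat \<Rightarrow> nat) \<Rightarrow> nat \<Rightarrow> nat \<Rightarrow> real" where
  "p_pair K n c k k' = (real (cnt n c k) + real (cnt n c k')) / (real (K - 1) * real n)"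

definition ratio :: "nat \<Rightarrow> nat \<Rightarrow> ((nat \<Rightarrow> nat) \<Rightarrow> real) \<Rightarrow> (nat \<Rightarrow> nat) \<Rightarrow> nat \<Rightarrow> nat \<Rightarrow> nat \<Rightarrow> real" where
  "ratio K n \<pi> c i km kp =
     real (cnt n c km) / (real (cnt n c kp) + 1) * (cond_prob K \<pi> c i kp / cond_prob K \<pi> c i km)"

definition move_prob :: "nat \<Rightarrow> nat \<Rightarrow> ((nat \<Rightarrow> nat) \<Rightarrow> real) \<Rightarrow> (nat \<Rightarrow> nat) \<Rightarrow> (nat \<Rightarrow> nat) \<Rightarrow> nat \<Rightarrow> nat \<Rightarrow> real" where
  "move_prob K n \<pi> c c' km kp =
     (if cnt n c km = 0 then (if c' = c then 1 else 0)
      else (1 / real (cnt n c km)) *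
        (\<Sum>i\<in>{i\<in>{1..n}. c i = km}.
            min 1 (ratio K n \<pi> c i km kp) * (if c' = c(i := kp) then 1 else 0)
          + (1 - min 1 (ratio K n \<pi> c i km kp)) * (if c' = c then 1 else 0)))"

definition P_R :: "nat \<Rightarrow> nat \<Rightarrow> ((nat \<Rightarrow> nat) \<Rightarrow> real) \<Rightarrow> (nat \<Rightarrow> nat) \<Rightarrow> (nat \<Rightarrow> nat) \<Rightarrow> real" where
  "P_R K n \<pi> c c' =
     (\<Sum>(k, k')\<in>{(k, k'). k \<in> {1..K} \<and> k' \<in> {1..K} \<and> k < k'}.
        p_pair K n c k k' *
        ((1/2) * move_prob K n \<pi> c c' k k' + (1/2) * move_prob K n \<pi> c c' k' k))"

end

theory Submission
  imports Defs
begin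

text \<open>
  Only single-site updates c' = c(i := b) with b \<noteq> c i matter, since otherwise
  P_MG(c, c') = 0. For such c', write a = c i. The pair {a, b} is proposed with
  probability (n_a + n_b) / ((K - 1) n); with probability 1/2 it is oriented as (a, b),
  and then site i is picked with probability 1 / n_a and accepted with probability
  min 1 r, where r = n_a / (n_b + 1) * q_b / q_a with q_k = \<pi>(c_i = k | c_{-i}).
  It remains to see that (n_a + n_b) / n_a * min 1 r \<ge> q_b: if r \<ge> 1 this holds
  because q_b \<le> 1, and otherwise because (n_a + n_b) / (n_b + 1) \<ge> 1 \<ge> q_a.
\<close>

lemma fun_upd_in_configs:
  assumes "c \<in> configs K n" "i \<in> {1..n}" "j \<in> {1..K}"
  shows "c(i := j) \<in> configs K n"
  using assms unfolding configs_def by (auto simp: PiE_def extensional_def)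

lemma configs_eq_fun_upd:
  assumes "c \<in> configs K n" "c' \<in> configs K n" "i \<in> {1..n}"
    and "\<forall>j\<in>{1..n}. j \<noteq> i \<longrightarrow> c' j = c j"
  shows "c' = c(i := c' i)"
proof
  fix j
  show "c' j = (c(i := c' i)) j"
    using assms unfolding configs_def by (cases "j \<in> {1..n}") (auto simp: PiE_def extensional_def)
qed

lemma cnt_pos:
  assumes "i \<in> {1..n}"
  shows "cnt n c (c i) > 0"
  using assms unfolding cnt_def by (auto simp: card_gt_0_iff)

lemma distribution_nonneg_upd:
  assumes "is_distribution K n \<pi>" "c \<in> configs K n" "i \<in> {1..n}" "j \<in> {1..K}"
  shows "\<pi> (c(i := j)) \<ge> 0"
  using assms fun_upd_in_configs unfolding is_distribution_def by blast

lemma cond_prob_nonneg: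
  assumes "is_distribution K n \<pi>" "c \<in> configs K n" "i \<in> {1..n}" "k \<in> {1..K}"
  shows "cond_prob K \<pi> c i k \<ge> 0"
  unfolding cond_prob_def using assms distribution_nonneg_upd[OF assms(1-3)]
  by (intro divide_nonneg_nonneg sum_nonneg) auto

lemma cond_prob_le_1:
  assumes "is_distribution K n \<pi>" "c \<in> configs K n" "i \<in> {1..n}" "k \<in> {1..K}"
  shows "cond_prob K \<pi> c i k \<le> 1"
proof -
  have "\<pi> (c(i := k)) \<le> (\<Sum>j\<in>{1..K}. \<pi> (c(i := j)))"
    using assms distribution_nonneg_upd[OF assms(1-3)] by (intro member_le_sum) auto
  moreover have "(\<Sum>j\<in>{1..K}. \<pi> (c(i := j))) \<ge> 0"
    using distribution_nonneg_upd[OF assms(1-3)] by (intro sum_nonneg) auto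
  ultimately show ?thesis
    unfolding cond_prob_def by (auto simp: divide_le_eq_1)
qed

lemma cond_prob_current_pos:
  assumes "is_distribution K n \<pi>" "c \<in> configs K n" "i \<in> {1..n}" "\<pi> c > 0"
  shows "cond_prob K \<pi> c i (c i) > 0"
proof -
  have ci: "c i \<in> {1..K}"
    using assms(2,3) unfolding configs_def by auto
  have "\<pi> c \<le> (\<Sum>j\<in>{1..K}. \<pi> (c(i := j)))"
    using member_le_sum[of "c i" "{1..K}" "\<lambda>j. \<pi> (c(i := j))"] ci
      distribution_nonneg_upd[OF assms(1-3)] by auto
  then show ?thesis
    unfolding cond_prob_def using assms(4) by simp
qed

lemma ratio_nonneg:
  assumes "is_distribution K n \<pi>" "c \<in> configs K n" "i \<in> {1..n}"
    and "km \<in> {1..K}" "kp \<in> {1..K}"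
  shows "ratio K n \<pi> c i km kp \<ge> 0"
  unfolding ratio_def using cond_prob_nonneg[OF assms(1-3)] assms(4,5)
  by (intro mult_nonneg_nonneg divide_nonneg_nonneg) auto

lemma move_prob_nonneg:
  assumes "is_distribution K n \<pi>" "c \<in> configs K n" "km \<in> {1..K}" "kp \<in> {1..K}"
  shows "move_prob K n \<pi> c c' km kp \<ge> 0"
  unfolding move_prob_def using ratio_nonneg[OF assms(1,2) _ assms(3,4)]
  by (auto intro!: divide_nonneg_nonneg sum_nonneg add_nonneg_nonneg mult_nonneg_nonneg)

lemma move_prob_ge_acceptance:
  assumes "is_distribution K n \<pi>" "c \<in> configs K n" "i \<in> {1..n}"
    and "kp \<in> {1..K}" "kp \<noteq> c i"
  shows "move_prob K n \<pi> c (c(i := kp)) (c i) kp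
           \<ge> min 1 (ratio K n \<pi> c i (c i) kp) / real (cnt n c (c i))"
proof -
  let ?km = "c i"
  have km: "?km \<in> {1..K}"
    using assms(2,3) unfolding configs_def by auto
  have upd_ne: "c(i := kp) \<noteq> c"
    using assms(5) by (metis fun_upd_same)
  let ?summand = "\<lambda>i'. min 1 (ratio K n \<pi> c i' ?km kp) * (if c(i := kp) = c(i' := kp) then 1 else 0)
                   + (1 - min 1 (ratio K n \<pi> c i' ?km kp)) * (if c(i := kp) = c then 1 else 0)"
  have "min 1 (ratio K n \<pi> c i ?km kp) = ?summand i"
    using upd_ne by simp
  also have "\<dots> \<le> sum ?summand {i'\<in>{1..n}. c i' = ?km}"
    using assms(3) upd_ne ratio_nonneg[OF assms(1,2) _ km assms(4)]
    by (intro member_le_sum) auto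
  finally show ?thesis
    using cnt_pos[OF assms(3), of c] unfolding move_prob_def
    by (simp add: divide_right_mono)
qed

lemma P_R_nonneg:
  assumes "is_distribution K n \<pi>" "c \<in> configs K n"
  shows "P_R K n \<pi> c c' \<ge> 0"
  unfolding P_R_def p_pair_def using move_prob_nonneg[OF assms]
  by (auto intro!: sum_nonneg)

lemma P_R_ge_oriented_move:
  assumes "is_distribution K n \<pi>" "c \<in> configs K n"
    and "a \<in> {1..K}" "b \<in> {1..K}" "a \<noteq> b"
  shows "P_R K n \<pi> c c' \<ge> p_pair K n c a b * move_prob K n \<pi> c c' a b / 2"
proof -
  define pairs where "pairs = {(k, k'). k \<in> {1..K} \<and> k' \<in> {1..K} \<and> k < k'}"
  define summand where "summand = (\<lambda>(k, k'). p_pair K n c k k' *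
    ((1/2) * move_prob K n \<pi> c c' k k' + (1/2) * move_prob K n \<pi> c c' k' k))"
  have p_pair_sym: "p_pair K n c k k' = p_pair K n c k' k" for k k'
    unfolding p_pair_def by simp
  have p_pair_nonneg: "p_pair K n c a b \<ge> 0"
    unfolding p_pair_def by simp
  have summand_nonneg: "summand x \<ge> 0" if "x \<in> pairs" for x
    using that move_prob_nonneg[OF assms(1,2)]
    unfolding pairs_def summand_def p_pair_def by (auto intro!: mult_nonneg_nonneg)
  have "p_pair K n c a b * move_prob K n \<pi> c c' a b / 2
      \<le> p_pair K n c a b * (move_prob K n \<pi> c c' a b / 2 + move_prob K n \<pi> c c' b a / 2)"
    using move_prob_nonneg[OF assms(1,2) assms(4,3)] p_pair_nonneg by (simp add: distrib_left)
  also have "\<dots> = summand (min a b, max a b)"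
    using p_pair_sym[of a b] unfolding summand_def by (cases "a < b") (auto simp: min_def max_def)
  also have "\<dots> \<le> sum summand pairs"
    using assms(3-5) summand_nonneg
    by (intro member_le_sum) (auto simp: pairs_def min_def max_def intro: finite_subset[of _ "{1..K} \<times> {1..K}"])
  also have "\<dots> = P_R K n \<pi> c c'"
    unfolding P_R_def pairs_def summand_def ..
  finally show ?thesis .
qed

lemma acceptance_bound:
  fixes na nb qa qb :: real
  assumes "na \<ge> 1" "nb \<ge> 0" "0 < qa" "qa \<le> 1" "0 \<le> qb" "qb \<le> 1"
  shows "qb \<le> (na + nb) / na * min 1 (na / (nb + 1) * (qb / qa))"
proof (cases "na / (nb + 1) * (qb / qa) \<ge> 1")
  case True
  then have "min 1 (na / (nb + 1) * (qb / qa)) = 1"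
    by simp
  moreover have "1 \<le> (na + nb) / na"
    using assms by simp
  ultimately show ?thesis
    using assms(6) by (metis mult.right_neutral order_trans)
next
  case False
  have "qb \<le> qb / qa"
    using assms by (simp add: le_divide_eq mult_left_le)
  also have "\<dots> \<le> (na + nb) / (nb + 1) * (qb / qa)"
    using mult_right_mono[of 1 "(na + nb) / (nb + 1)" "qb / qa"] assms by simp
  also have "\<dots> = (na + nb) / na * (na / (nb + 1) * (qb / qa))"
    using assms by simp
  finally show ?thesis
    using False by simp
qed

lemma P_R_ge_single_site:
  assumes "is_distribution K n \<pi>" "c \<in> configs K n" "\<pi> c > 0"
    and "i \<in> {1..n}" "b \<in> {1..K}" "b \<noteq> c i"
  shows "P_R K n \<pi> c (c(i := b)) \<ge> cond_prob K \<pi> c i b / (2 * real (K - 1) * real n)"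
proof -
  define a where "a = c i"
  have a: "a \<in> {1..K}"
    using assms(2,4) unfolding a_def configs_def by auto
  define na where "na = real (cnt n c a)"
  define nb where "nb = real (cnt n c b)"
  define acc where "acc = min 1 (ratio K n \<pi> c i a b)"
  have na: "na \<ge> 1"
    using cnt_pos[OF assms(4), of c] unfolding na_def a_def by linarith
  have K: "real (K - 1) > 0" and n: "real n > 0"
    using a assms(4-6) unfolding a_def by auto
  have "cond_prob K \<pi> c i a > 0"
    using cond_prob_current_pos[OF assms(1,2,4,3)] unfolding a_def .
  then have "cond_prob K \<pi> c i b \<le> (na + nb) / na * acc"
    unfolding acc_def ratio_def na_def[symmetric] nb_def[symmetric]
    using na cond_prob_le_1[OF assms(1,2,4)] cond_prob_nonneg[OF assms(1,2,4)] assms(5) a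
    by (intro acceptance_bound) (auto simp: nb_def)
  then have "cond_prob K \<pi> c i b / (2 * real (K - 1) * real n)
      \<le> (na + nb) / na * acc / (2 * real (K - 1) * real n)"
    by (rule divide_right_mono) (use K n in simp)
  also have "\<dots> = p_pair K n c a b * (acc / na) / 2"
    unfolding p_pair_def na_def nb_def using na by (simp add: field_simps)
  also have "\<dots> \<le> p_pair K n c a b * move_prob K n \<pi> c (c(i := b)) a b / 2"
    using move_prob_ge_acceptance[OF assms(1,2,4-6)]
    unfolding acc_def na_def a_def p_pair_def by (intro divide_right_mono mult_left_mono) auto
  also have "\<dots> \<le> P_R K n \<pi> c (c(i := b))"
    using P_R_ge_oriented_move[OF assms(1,2) a assms(5)] assms(6) a_def by simp
  finally show ?thesis .
qed

lemma P_MG_single_site: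
  assumes "i \<in> {1..n}" "b \<noteq> c i"
  shows "P_MG K n \<pi> c (c(i := b)) = cond_prob K \<pi> c i b / real n"
proof -
  have "(\<forall>j\<in>{1..n}. j \<noteq> i' \<longrightarrow> (c(i := b)) j = c j) \<longleftrightarrow> i' = i" if "i' \<in> {1..n}" for i'
    using assms that by auto
  then have "(\<Sum>i'\<in>{1..n}. if \<forall>j\<in>{1..n}. j \<noteq> i' \<longrightarrow> (c(i := b)) j = c j
               then cond_prob K \<pi> c i' ((c(i := b)) i') else 0)
           = (\<Sum>i'\<in>{1..n}. if i' = i then cond_prob K \<pi> c i b else 0)"
    by (intro sum.cong) auto
  then show ?thesis
    unfolding P_MG_def using assms(1) by simp
qed

lemma P_MG_not_single_site:
  assumes "\<not> (\<exists>i\<in>{1..n}. \<forall>j\<in>{1..n}. j \<noteq> i \<longrightarrow> c' j = c j)"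
  shows "P_MG K n \<pi> c c' = 0"
  unfolding P_MG_def using assms by (intro mult_eq_0_iff[THEN iffD2] disjI2 sum.neutral) auto

theorem mainTheorem2:
  fixes K n :: nat and \<pi> :: "(nat \<Rightarrow> nat) \<Rightarrow> real" and c c' :: "nat \<Rightarrow> nat"
  assumes "K \<ge> 2" and "n \<ge> 1"
    and "is_distribution K n \<pi>"
    and "c \<in> configs K n" and "c' \<in> configs K n" and "c \<noteq> c'"
    and "\<pi> c > 0"
  shows "P_R K n \<pi> c c' \<ge> 1 / (2 * real (K - 1)) * P_MG K n \<pi> c c'"
proof (cases "\<exists>i\<in>{1..n}. \<forall>j\<in>{1..n}. j \<noteq> i \<longrightarrow> c' j = c j")
  case True
  then obtain i where i: "i \<in> {1..n}" and agree: "\<forall>j\<in>{1..n}. j \<noteq> i \<longrightarrow> c' j = c j"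
    by blast
  define b where "b = c' i"
  have c': "c' = c(i := b)"
    using configs_eq_fun_upd[OF assms(4,5) i agree] unfolding b_def .
  have b: "b \<in> {1..K}" "b \<noteq> c i"
    using assms(5,6) i c' unfolding b_def configs_def by auto
  show ?thesis
    using P_R_ge_single_site[OF assms(3,4,7) i b] P_MG_single_site[where c = c, OF i b(2)]
    unfolding c' by simp
next
  case False
  then show ?thesis
    using P_MG_not_single_site P_R_nonneg[OF assms(3,4)] by simp
qed

end
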